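(* For every pairwise spanner instance on a directed graph with uniform edge lengths and $k$ terminal pairs, there exists a junction tree solution whose cost is $O(\sqrt{k})\cdot\mathsf{OPT}$.
   Context: Pairwise spanner problem: given a directed graph $G=(V,E)$ with $\ell(e)=1$ for all $e$, terminal pairs $(s_i,t_i)$, $i\in[k]$, and target distances $d_i$ with $d_G(s_i,t_i)\le d_i$, find $F\subseteq E$ of minimum cardinality such that $(V,F)$ contains an $s_i\leadsto t_i$ path with at most $d_i$ edges for every $i$; $\mathsf{OPT}$ is this minimum. A junction tree rooted at $r\in V$ is a subgraph $J$ of $G$ that is the union of an in-arborescence $A^{in}$ rooted at $r$ and an out-arborescence $A^{out}$ rooted at $r$. A terminal pair $(s_i,t_i)$ is connected by $J$ if $s_i\in A^{in}$, $t_i\in A^{out}$, and the $s_i\leadsto r$ path in $A^{in}$ plus the $r\leadsto t_i$ path in $A^{out}$ have at most $d_i$ edges in total. A junction tree solution is a finite collection of junction trees (possibly with different roots) such that every terminal pair is connected by at least one of them; its cost is $\sum_J|E(J)|$, i.e., edges belonging to several junction trees are counted with multiplicity. *)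

theory Defs
  imports Complex_Main
begin

text \<open>All edges have length 1,
 so "a u-v path with at most n edges in F" is (u,v) in F^^j for some j \<le> n
 (a walk with \<le> n edges contains a path with \<le> n edges).\<close>

definition walk_within :: "('a \<times> 'a) set \<Rightarrow> nat \<Rightarrow> 'a \<Rightarrow> 'a \<Rightarrow> bool" where
  "walk_within F n u v \<longleftrightarrow> (\<exists>j\<le>n. (u, v) \<in> F ^^ j)"

definition arb_verts :: "'a \<Rightarrow> ('a \<times> 'a) set \<Rightarrow> 'a set" where
  "arb_verts r T = {r} \<union> fst ` T \<union> snd ` T"

definition out_arb :: "'a \<Rightarrow> ('a \<times> 'a) set \<Rightarrow> bool" where
  "out_arb r T \<longleftrightarrow> finite T \<and> (\<forall>u. (u, r) \<notin> T)
     \<and> (\<forall>v \<in> arb_verts r T. v \<noteq> r \<longrightarrow> (\<exists>!u. (u, v) \<in> T))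
     \<and> (\<forall>v \<in> arb_verts r T. (r, v) \<in> T\<^sup>*)"

definition in_arb :: "'a \<Rightarrow> ('a \<times> 'a) set \<Rightarrow> bool" where
  "in_arb r T \<longleftrightarrow> out_arb r (T\<inverse>)"

definition junction_tree :: "('a \<times> 'a) set \<Rightarrow> 'a \<times> ('a \<times> 'a) set \<times> ('a \<times> 'a) set \<Rightarrow> bool" where
  "junction_tree E J = (case J of (r, Ain, Aout) \<Rightarrow>
     Ain \<subseteq> E \<and> Aout \<subseteq> E \<and> in_arb r Ain \<and> out_arb r Aout)"

text \<open>Paths in arborescences are unique, so the existence of walks of lengths a, b with
 a + b \<le> d expresses that the tree path lengths sum to at most d.\<close>
definition jt_connects :: "'a \<times> ('a \<times> 'a) set \<times> ('a \<times> 'a) set \<Rightarrow> 'a \<Rightarrow> 'a \<Rightarrow> nat \<Rightarrow> bool" where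
  "jt_connects J s t d = (case J of (r, Ain, Aout) \<Rightarrow>
     s \<in> arb_verts r Ain \<and> t \<in> arb_verts r Aout \<and>
     (\<exists>a b. a + b \<le> d \<and> (s, r) \<in> Ain ^^ a \<and> (r, t) \<in> Aout ^^ b))"

definition jt_cost :: "'a \<times> ('a \<times> 'a) set \<times> ('a \<times> 'a) set \<Rightarrow> nat" where
  "jt_cost J = (case J of (r, Ain, Aout) \<Rightarrow> card (Ain \<union> Aout))"

definition junction_solution ::
  "('a \<times> 'a) set \<Rightarrow> nat \<Rightarrow> (nat \<Rightarrow> 'a) \<Rightarrow> (nat \<Rightarrow> 'a) \<Rightarrow> (nat \<Rightarrow> nat)
     \<Rightarrow> ('a \<times> ('a \<times> 'a) set \<times> ('a \<times> 'a) set) list \<Rightarrow> bool" where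
  "junction_solution E k s t d Js \<longleftrightarrow> (\<forall>J \<in> set Js. junction_tree E J)
     \<and> (\<forall>i<k. \<exists>J \<in> set Js. jt_connects J (s i) (t i) (d i))"

text \<open>Cost counts edges with multiplicity over the junction trees.\<close>
definition solution_cost :: "('a \<times> ('a \<times> 'a) set \<times> ('a \<times> 'a) set) list \<Rightarrow> nat" where
  "solution_cost Js = (\<Sum>J\<leftarrow>Js. jt_cost J)"

definition spanner_feasible ::
  "('a \<times> 'a) set \<Rightarrow> nat \<Rightarrow> (nat \<Rightarrow> 'a) \<Rightarrow> (nat \<Rightarrow> 'a) \<Rightarrow> (nat \<Rightarrow> nat) \<Rightarrow> ('a \<times> 'a) set \<Rightarrow> bool" where
  "spanner_feasible E k s t d F \<longleftrightarrow> F \<subseteq> E \<and> (\<forall>i<k. walk_within F (d i) (s i) (t i))"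

definition OPT ::
  "('a \<times> 'a) set \<Rightarrow> nat \<Rightarrow> (nat \<Rightarrow> 'a) \<Rightarrow> (nat \<Rightarrow> 'a) \<Rightarrow> (nat \<Rightarrow> nat) \<Rightarrow> nat" where
  "OPT E k s t d = Min (card ` {F. spanner_feasible E k s t d F})"

end

theory Submission
  imports Defs
begin

text \<open>Fix an optimal spanner \<open>F\<close> and, for every pair \<open>i\<close>, the edge set \<open>P i \<subseteq> F\<close> of an
  \<open>s i\<close>-\<open>t i\<close> walk with at most \<open>d i\<close> edges. While some edge of \<open>F\<close> lies on at least
  \<open>\<surd>k\<close> of the walks of the pairs not yet served, take the union of shortest-path in- and
  out-trees of \<open>F\<close> rooted at the tail of that edge: a single junction tree of cost at most
  \<open>|F|\<close> serving all these pairs. This happens at most \<open>\<surd>k\<close> times. Each remaining pair gets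
  the shortest-path out-tree of its own walk rooted at \<open>s i\<close>; as every edge now lies on fewer
  than \<open>\<surd>k\<close> of the remaining walks, double counting bounds their total cost by \<open>\<surd>k \<cdot> |F|\<close>.\<close>

lemma relpow_converse: "((R :: ('a \<times> 'a) set)\<inverse>) ^^ n = (R ^^ n)\<inverse>"
  by (induction n) (simp_all add: converse_relcomp flip: relpow_commute)

lemma relpow_mono: "(R :: ('a \<times> 'a) set) \<subseteq> S \<Longrightarrow> R ^^ n \<subseteq> S ^^ n"
  by (induction n) (auto simp: relcomp_mono)

lemma relpow_in_arb_verts:
  assumes "(x, y) \<in> T ^^ n"
  shows "x \<in> arb_verts y T" and "y \<in> arb_verts x T"
proof -
  have "(x = y \<or> x \<in> fst ` T) \<and> (x = y \<or> y \<in> snd ` T)"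
  proof (cases n)
    case (Suc m)
    obtain z z' where "(x, z) \<in> T" "(z', y) \<in> T"
      using assms Suc by (metis relpow_Suc_D2 relpow_Suc_E)
    then show ?thesis by force
  qed (use assms in simp)
  then show "x \<in> arb_verts y T" "y \<in> arb_verts x T"
    unfolding arb_verts_def by auto
qed

definition walk_dist :: "('a \<times> 'a) set \<Rightarrow> 'a \<Rightarrow> 'a \<Rightarrow> nat" where
  "walk_dist F u v = (LEAST n. (u, v) \<in> F ^^ n)"

lemma walk_dist_le: "(u, v) \<in> F ^^ n \<Longrightarrow> walk_dist F u v \<le> n"
  unfolding walk_dist_def by (rule Least_le)

lemma relpow_walk_dist: "(u, v) \<in> F\<^sup>* \<Longrightarrow> (u, v) \<in> F ^^ walk_dist F u v"
  unfolding walk_dist_def rtrancl_power by (rule LeastI_ex)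

lemma walk_dist_last_edge:
  assumes "(r, v) \<in> F\<^sup>*" and "v \<noteq> r"
  shows "\<exists>u. (u, v) \<in> F \<and> (r, u) \<in> F\<^sup>* \<and> Suc (walk_dist F r u) = walk_dist F r v"
proof -
  have walk: "(r, v) \<in> F ^^ walk_dist F r v"
    using assms(1) by (rule relpow_walk_dist)
  with assms(2) obtain m where m: "walk_dist F r v = Suc m"
    by (cases "walk_dist F r v") auto
  with walk obtain u where u: "(r, u) \<in> F ^^ m" "(u, v) \<in> F"
    by (metis relpow_Suc_E)
  have "(r, u) \<in> F\<^sup>*"
    using u(1) by (rule relpow_imp_rtrancl)
  then have "(r, v) \<in> F ^^ Suc (walk_dist F r u)"
    using u(2) relpow_walk_dist relpow_Suc_I by metis
  then have "walk_dist F r v \<le> Suc (walk_dist F r u)"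
    by (rule walk_dist_le)
  moreover have "walk_dist F r u \<le> m"
    using u(1) by (rule walk_dist_le)
  ultimately show ?thesis
    using u(2) \<open>(r, u) \<in> F\<^sup>*\<close> m by (intro exI[of _ u]) simp
qed

definition bfs_parent :: "('a \<times> 'a) set \<Rightarrow> 'a \<Rightarrow> 'a \<Rightarrow> 'a" where
  "bfs_parent F r v =
     (SOME u. (u, v) \<in> F \<and> (r, u) \<in> F\<^sup>* \<and> Suc (walk_dist F r u) = walk_dist F r v)"

definition bfs_tree :: "('a \<times> 'a) set \<Rightarrow> 'a \<Rightarrow> ('a \<times> 'a) set" where
  "bfs_tree F r = {(bfs_parent F r v, v) | v. (r, v) \<in> F\<^sup>* \<and> v \<noteq> r}"

lemma bfs_parent:
  assumes "(r, v) \<in> F\<^sup>*" and "v \<noteq> r"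
  shows "(bfs_parent F r v, v) \<in> F" and "(r, bfs_parent F r v) \<in> F\<^sup>*"
    and "Suc (walk_dist F r (bfs_parent F r v)) = walk_dist F r v"
  using someI_ex[OF walk_dist_last_edge[OF assms]] unfolding bfs_parent_def by blast+

lemma bfs_tree_subset: "bfs_tree F r \<subseteq> F"
  unfolding bfs_tree_def by (auto intro: bfs_parent(1))

lemma relpow_bfs_tree: "(r, v) \<in> F\<^sup>* \<Longrightarrow> (r, v) \<in> bfs_tree F r ^^ walk_dist F r v"
proof (induction "walk_dist F r v" arbitrary: v)
  case 0
  show ?case
    using relpow_walk_dist[OF 0(2)] unfolding 0(1)[symmetric] by simp
next
  case (Suc n)
  have "v \<noteq> r"
    using Suc.hyps(2) walk_dist_le[OF relpow_0_I, of F r] by auto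
  then have "(bfs_parent F r v, v) \<in> bfs_tree F r"
    using Suc.prems unfolding bfs_tree_def by blast
  moreover have "(r, bfs_parent F r v) \<in> bfs_tree F r ^^ n"
    using Suc bfs_parent[OF Suc.prems \<open>v \<noteq> r\<close>] by (metis Suc_inject)
  ultimately show ?case
    using Suc.hyps(2) by (metis relpow_Suc_I)
qed

lemma bfs_tree_reachable:
  assumes "(x, y) \<in> bfs_tree F r"
  shows "(r, x) \<in> F\<^sup>*" and "(r, y) \<in> F\<^sup>*"
  using assms bfs_parent(2) unfolding bfs_tree_def by auto

lemma bfs_tree_shortcut:
  assumes "(r, v) \<in> F ^^ n"
  shows "\<exists>m\<le>n. (r, v) \<in> bfs_tree F r ^^ m"
proof (intro exI conjI)
  show "walk_dist F r v \<le> n"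
    using assms by (rule walk_dist_le)
  show "(r, v) \<in> bfs_tree F r ^^ walk_dist F r v"
    using assms by (intro relpow_bfs_tree relpow_imp_rtrancl)
qed

lemma out_arb_bfs_tree:
  assumes "finite F"
  shows "out_arb r (bfs_tree F r)"
  unfolding out_arb_def
proof (intro conjI ballI impI allI)
  show "finite (bfs_tree F r)"
    using finite_subset[OF bfs_tree_subset assms] .
  show "(u, r) \<notin> bfs_tree F r" for u
    unfolding bfs_tree_def by simp
  fix v
  assume "v \<in> arb_verts r (bfs_tree F r)"
  then have reach: "(r, v) \<in> F\<^sup>*"
    unfolding arb_verts_def using bfs_tree_reachable by fastforce
  show "(r, v) \<in> (bfs_tree F r)\<^sup>*"
    using relpow_bfs_tree[OF reach] by (rule relpow_imp_rtrancl)
  show "v \<noteq> r \<Longrightarrow> \<exists>!u. (u, v) \<in> bfs_tree F r"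
    using reach unfolding bfs_tree_def by auto
qed

definition walk_via :: "('a \<times> 'a) set \<Rightarrow> nat \<Rightarrow> 'a \<Rightarrow> 'a \<Rightarrow> 'a \<Rightarrow> bool" where
  "walk_via F d s t u \<longleftrightarrow> (\<exists>a b. a + b \<le> d \<and> (s, u) \<in> F ^^ a \<and> (u, t) \<in> F ^^ b)"

lemma walk_via_mono:
  assumes "walk_via F d s t u" and "F \<subseteq> G" and "d \<le> d'"
  shows "walk_via G d' s t u"
proof -
  obtain a b where "a + b \<le> d" "(s, u) \<in> F ^^ a" "(u, t) \<in> F ^^ b"
    using assms(1) unfolding walk_via_def by blast
  moreover have "F ^^ a \<subseteq> G ^^ a" "F ^^ b \<subseteq> G ^^ b"
    using relpow_mono assms(2) by blast+
  ultimately show ?thesis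
    using assms(3) unfolding walk_via_def by (intro exI[of _ a] exI[of _ b]) auto
qed

lemma walk_via_snoc:
  assumes "walk_via F d s m u" and "(m, t) \<in> F"
  shows "walk_via F (Suc d) s t u"
proof -
  obtain a b where "a + b \<le> d" "(s, u) \<in> F ^^ a" "(u, m) \<in> F ^^ b"
    using assms(1) unfolding walk_via_def by blast
  then show ?thesis
    using relpow_Suc_I[OF _ assms(2)] unfolding walk_via_def
    by (intro exI[of _ a] exI[of _ "Suc b"]) auto
qed

definition hub_tree :: "('a \<times> 'a) set \<Rightarrow> 'a \<Rightarrow> 'a \<times> ('a \<times> 'a) set \<times> ('a \<times> 'a) set" where
  "hub_tree F u = (u, (bfs_tree (F\<inverse>) u)\<inverse>, bfs_tree F u)"

lemma hub_tree_subset: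
  "(bfs_tree (F\<inverse>) u)\<inverse> \<subseteq> F" "bfs_tree F u \<subseteq> F"
  using bfs_tree_subset[of "F\<inverse>" u] bfs_tree_subset[of F u]
  by (simp_all add: converse_subset_swap)

lemma junction_tree_hub_tree:
  assumes "finite F" and "F \<subseteq> E"
  shows "junction_tree E (hub_tree F u)"
proof -
  have "(bfs_tree (F\<inverse>) u)\<inverse> \<subseteq> E" "bfs_tree F u \<subseteq> E"
    using hub_tree_subset[of F u] assms(2) by blast+
  moreover have "out_arb u (bfs_tree (F\<inverse>) u)" "out_arb u (bfs_tree F u)"
    using assms(1) by (simp_all add: out_arb_bfs_tree)
  ultimately show ?thesis
    unfolding junction_tree_def hub_tree_def in_arb_def by simp
qed

lemma jt_cost_hub_tree: "finite F \<Longrightarrow> jt_cost (hub_tree F u) \<le> card F"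
  unfolding jt_cost_def hub_tree_def using hub_tree_subset[of F u] by (simp add: card_mono)

lemma jt_connects_hub_tree:
  assumes "walk_via F d s t u"
  shows "jt_connects (hub_tree F u) s t d"
proof -
  obtain a b where ab: "a + b \<le> d" "(s, u) \<in> F ^^ a" "(u, t) \<in> F ^^ b"
    using assms unfolding walk_via_def by blast
  have "(u, s) \<in> F\<inverse> ^^ a"
    using ab(2) by (simp add: relpow_converse)
  then obtain a' where a': "a' \<le> a" "(u, s) \<in> bfs_tree (F\<inverse>) u ^^ a'"
    by (blast dest: bfs_tree_shortcut)
  then have "(s, u) \<in> (bfs_tree (F\<inverse>) u)\<inverse> ^^ a'"
    by (simp add: relpow_converse)
  moreover obtain b' where b': "b' \<le> b" "(u, t) \<in> bfs_tree F u ^^ b'"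
    using bfs_tree_shortcut[OF ab(3)] by blast
  moreover have "a' + b' \<le> d"
    using ab(1) a'(1) b'(1) by simp
  ultimately show ?thesis
    unfolding jt_connects_def hub_tree_def using relpow_in_arb_verts by auto
qed

lemma walk_edge_set:
  "(s, t) \<in> F ^^ j \<Longrightarrow> \<exists>X\<subseteq>F. \<forall>u \<in> insert s (fst ` X). walk_via X j s t u"
proof (induction j arbitrary: t)
  case 0
  then show ?case
    unfolding walk_via_def by (intro exI[of _ "{}"]) auto
next
  case (Suc j)
  then obtain m where m: "(s, m) \<in> F ^^ j" "(m, t) \<in> F"
    by (meson relpow_Suc_E)
  then obtain X where X: "X \<subseteq> F" "\<forall>u \<in> insert s (fst ` X). walk_via X j s m u"
    using Suc.IH by blast
  define Y where "Y = insert (m, t) X"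
  have old: "walk_via Y (Suc j) s t u" if "u \<in> insert s (fst ` X)" for u
  proof -
    have "walk_via Y j s m u"
      using X(2) that walk_via_mono[of X j s m u Y j] unfolding Y_def by blast
    then show ?thesis
      using walk_via_snoc[of Y j s m u t] unfolding Y_def by simp
  qed
  have new: "walk_via Y (Suc j) s t m"
  proof -
    obtain a b where "a + b \<le> j" "(s, m) \<in> X ^^ b"
      using X(2) unfolding walk_via_def by blast
    moreover have "X ^^ b \<subseteq> Y ^^ b"
      using relpow_mono unfolding Y_def by blast
    ultimately have "(s, m) \<in> Y ^^ b" "b + 1 \<le> Suc j" "(m, t) \<in> Y ^^ 1"
      unfolding Y_def by auto
    then show ?thesis
      unfolding walk_via_def by blast
  qed
  have "Y \<subseteq> F"
    using X(1) m(2) unfolding Y_def by simp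
  moreover have "insert s (fst ` Y) = insert m (insert s (fst ` X))"
    unfolding Y_def by auto
  ultimately show ?case
    using old new by (intro exI[of _ Y]) auto
qed

lemma sum_card_le_if_sparse:
  fixes \<theta> :: real
  assumes "finite F" and "finite I" and "\<And>i. i \<in> I \<Longrightarrow> P i \<subseteq> F"
    and "\<And>e. e \<in> F \<Longrightarrow> card {i \<in> I. e \<in> P i} < \<theta>"
  shows "real (\<Sum>i\<in>I. card (P i)) \<le> card F * \<theta>"
proof -
  have "(\<Sum>i\<in>I. card (P i)) = (\<Sum>i\<in>I. card {e \<in> F. e \<in> P i})"
    using assms(3) by (intro sum.cong refl arg_cong[where f = card]) auto
  also have "\<dots> = (\<Sum>e\<in>F. card {i \<in> I. e \<in> P i})"
    using assms(1,2) by (intro sum_multicount_gen) auto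
  finally have "real (\<Sum>i\<in>I. card (P i)) = (\<Sum>e\<in>F. real (card {i \<in> I. e \<in> P i}))"
    by simp
  also have "\<dots> \<le> (\<Sum>e\<in>F. \<theta>)"
    using assms(4) by (intro sum_mono less_imp_le)
  finally show ?thesis
    by simp
qed

lemma sparse_cover:
  fixes \<theta> :: real
  assumes "finite F" and "finite I" and "\<And>i. i \<in> I \<Longrightarrow> P i \<subseteq> F"
    and "\<And>e. e \<in> F \<Longrightarrow> card {i \<in> I. e \<in> P i} < \<theta>"
    and "\<And>i. i \<in> I \<Longrightarrow> covers (L i) i"
    and "\<And>i. i \<in> I \<Longrightarrow> c (L i) \<le> card (P i)"
  shows "\<exists>Js. set Js \<subseteq> L ` I \<and> (\<forall>i\<in>I. \<exists>J\<in>set Js. covers J i) \<and>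
    real (\<Sum>J\<leftarrow>Js. c J) \<le> card F * \<theta>"
proof -
  obtain xs where xs: "set xs = I" "distinct xs"
    using finite_distinct_list[OF assms(2)] by blast
  have "(\<Sum>J\<leftarrow>map L xs. c J) = (\<Sum>i\<in>I. c (L i))"
    using xs by (simp add: sum_list_distinct_conv_sum_set)
  also have "\<dots> \<le> (\<Sum>i\<in>I. card (P i))"
    using assms(6) by (rule sum_mono)
  finally have "real (\<Sum>J\<leftarrow>map L xs. c J) \<le> real (\<Sum>i\<in>I. card (P i))"
    by (rule of_nat_mono)
  also have "\<dots> \<le> card F * \<theta>"
    using assms(1-4) by (rule sum_card_le_if_sparse)
  finally show ?thesis
    using xs(1) assms(5) by (intro exI[of _ "map L xs"]) auto
qed

lemma heavy_cover_cost:
  fixes \<theta> :: real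
  assumes "\<theta> > 0" and "c \<le> B" and "\<theta> \<le> card K" and "K \<subseteq> I" and "finite I"
  shows "real c + real B * card (I - K) / \<theta> \<le> real B * card I / \<theta>"
proof -
  have "real c * \<theta> \<le> real B * \<theta>"
    using assms(1,2) by (simp add: mult_right_mono)
  also have "\<dots> \<le> real B * card K"
    using assms(3) by (intro mult_left_mono) auto
  finally have "real c \<le> real B * card K / \<theta>"
    using assms(1) by (simp add: le_divide_eq)
  moreover have "finite K"
    using assms(4,5) by (rule finite_subset)
  then have "card (I - K) = card I - card K" "card K \<le> card I"
    using assms(4,5) by (simp_all add: card_Diff_subset card_mono)
  then have "real B * card (I - K) / \<theta> = real B * card I / \<theta> - real B * card K / \<theta>"
    by (simp add: right_diff_distrib diff_divide_distrib)
  ultimately show ?thesis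
    by simp
qed

lemma greedy_cover:
  fixes \<theta> :: real
  assumes "finite F" and "\<theta> > 0" and "finite I"
    and "\<And>i. i \<in> I \<Longrightarrow> P i \<subseteq> F"
    and "\<And>e i. e \<in> F \<Longrightarrow> i \<in> I \<Longrightarrow> e \<in> P i \<Longrightarrow> covers (H e) i"
    and "\<And>e. e \<in> F \<Longrightarrow> c (H e) \<le> B"
    and "\<And>i. i \<in> I \<Longrightarrow> covers (L i) i"
    and "\<And>i. i \<in> I \<Longrightarrow> c (L i) \<le> card (P i)"
  shows "\<exists>Js. set Js \<subseteq> H ` F \<union> L ` I \<and> (\<forall>i\<in>I. \<exists>J\<in>set Js. covers J i) \<and>
    real (\<Sum>J\<leftarrow>Js. c J) \<le> real B * card I / \<theta> + card F * \<theta>"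
  using assms(3-)
proof (induction "card I" arbitrary: I rule: less_induct)
  case less
  show ?case
  proof (cases "\<exists>e\<in>F. \<theta> \<le> card {i \<in> I. e \<in> P i}")
    case True
    then obtain e where e: "e \<in> F" "\<theta> \<le> card {i \<in> I. e \<in> P i}"
      by blast
    define K where "K = {i \<in> I. e \<in> P i}"
    have "K \<subseteq> I" "finite K" "card K > 0"
      using less.prems(1) e(2) assms(2) unfolding K_def by auto
    moreover have "card K \<le> card I"
      using less.prems(1) \<open>K \<subseteq> I\<close> by (rule card_mono)
    ultimately have "card (I - K) < card I"
      by (simp add: card_Diff_subset)
    then have "\<exists>Js. set Js \<subseteq> H ` F \<union> L ` (I - K) \<and> (\<forall>i\<in>I - K. \<exists>J\<in>set Js. covers J i) \<and>
      real (\<Sum>J\<leftarrow>Js. c J) \<le> real B * card (I - K) / \<theta> + card F * \<theta>"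
      by (rule less.hyps) (use less.prems in auto)
    then obtain Js where Js: "set Js \<subseteq> H ` F \<union> L ` (I - K)"
      "\<forall>i\<in>I - K. \<exists>J\<in>set Js. covers J i"
      "real (\<Sum>J\<leftarrow>Js. c J) \<le> real B * card (I - K) / \<theta> + card F * \<theta>"
      by blast
    have "set (H e # Js) \<subseteq> H ` F \<union> L ` I"
      using Js(1) e(1) by auto
    moreover have "\<forall>i\<in>I. \<exists>J\<in>set (H e # Js). covers J i"
      using Js(2) less.prems(3) e(1) unfolding K_def by auto
    moreover have "real (c (H e)) + real B * card (I - K) / \<theta> \<le> real B * card I / \<theta>"
      using heavy_cover_cost[OF assms(2) assms(6)[OF e(1)]] e(2) \<open>K \<subseteq> I\<close> less.prems(1)
      unfolding K_def by blast
    ultimately show ?thesis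
      using Js(3) by (intro exI[of _ "H e # Js"]) auto
  next
    case False
    then have sparse: "\<And>e. e \<in> F \<Longrightarrow> card {i \<in> I. e \<in> P i} < \<theta>"
      by (simp add: not_le)
    obtain Js where "set Js \<subseteq> L ` I" "\<forall>i\<in>I. \<exists>J\<in>set Js. covers J i"
      "real (\<Sum>J\<leftarrow>Js. c J) \<le> card F * \<theta>"
      using sparse_cover[where P = P and L = L and c = c and covers = covers,
          OF assms(1) less.prems(1,2) sparse less.prems(5,6)]
      by blast
    moreover have "0 \<le> real B * card I / \<theta>"
      using assms(2) by simp
    ultimately show ?thesis
      by (intro exI[of _ Js]) auto
  qed
qed

lemma spanner_walk_edge_sets:
  assumes "spanner_feasible E k s t d F"
  shows "\<exists>P. \<forall>i<k. P i \<subseteq> F \<and> (\<forall>u \<in> insert (s i) (fst ` P i). walk_via (P i) (d i) (s i) (t i) u)"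
proof -
  have "\<exists>X\<subseteq>F. \<forall>u \<in> insert (s i) (fst ` X). walk_via X (d i) (s i) (t i) u" if "i < k" for i
  proof -
    have "walk_within F (d i) (s i) (t i)"
      using assms that unfolding spanner_feasible_def by blast
    then obtain j where j: "j \<le> d i" "(s i, t i) \<in> F ^^ j"
      unfolding walk_within_def by blast
    obtain X where X: "X \<subseteq> F" "\<forall>u \<in> insert (s i) (fst ` X). walk_via X j (s i) (t i) u"
      using walk_edge_set[OF j(2)] by blast
    have "\<forall>u \<in> insert (s i) (fst ` X). walk_via X (d i) (s i) (t i) u"
      using X(2) by (simp add: walk_via_mono[OF _ order_refl j(1)])
    then show ?thesis
      using X(1) by blast
  qed
  then show ?thesis
    by (subst choice_iff'[symmetric]) blast
qed

lemma junction_solution_of_spanner: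
  assumes "finite E" and "spanner_feasible E k s t d F"
  shows "\<exists>Js. junction_solution E k s t d Js \<and> real (solution_cost Js) \<le> 2 * sqrt k * card F"
proof (cases "k = 0")
  case True
  then show ?thesis
    by (intro exI[of _ "[]"]) (simp add: junction_solution_def solution_cost_def)
next
  case False
  have FE: "F \<subseteq> E" and finF: "finite F"
    using assms finite_subset unfolding spanner_feasible_def by auto
  obtain P where P: "\<And>i. i < k \<Longrightarrow> P i \<subseteq> F"
    "\<And>i u. i < k \<Longrightarrow> u \<in> insert (s i) (fst ` P i) \<Longrightarrow> walk_via (P i) (d i) (s i) (t i) u"
    using spanner_walk_edge_sets[OF assms(2)] by metis
  define H :: "'a \<times> 'a \<Rightarrow> _" where "H = hub_tree F \<circ> fst"
  define L where "L i = hub_tree (P i) (s i)" for i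
  have "\<exists>Js. set Js \<subseteq> H ` F \<union> L ` {..<k} \<and>
      (\<forall>i\<in>{..<k}. \<exists>J\<in>set Js. jt_connects J (s i) (t i) (d i)) \<and>
      real (\<Sum>J\<leftarrow>Js. jt_cost J) \<le> real (card F) * card {..<k} / sqrt k + card F * sqrt k"
  proof (rule greedy_cover[OF finF])
    show "jt_connects (H e) (s i) (t i) (d i)" if "e \<in> F" "i \<in> {..<k}" "e \<in> P i" for e i
      using P(2)[of i "fst e"] walk_via_mono[OF _ P(1) order_refl] that
      unfolding H_def by (simp add: jt_connects_hub_tree)
    show "jt_connects (L i) (s i) (t i) (d i)" if "i \<in> {..<k}" for i
      unfolding L_def using P(2)[of i "s i"] that by (simp add: jt_connects_hub_tree)
    show "jt_cost (L i) \<le> card (P i)" if "i \<in> {..<k}" for i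
      unfolding L_def using P(1) that finite_subset[OF _ finF] by (simp add: jt_cost_hub_tree)
    show "jt_cost (H e) \<le> card F" for e
      unfolding H_def using finF by (simp add: jt_cost_hub_tree)
  qed (use False P(1) in auto)
  then obtain Js where Js: "set Js \<subseteq> H ` F \<union> L ` {..<k}"
      "\<forall>i<k. \<exists>J\<in>set Js. jt_connects J (s i) (t i) (d i)"
      "real (solution_cost Js) \<le> real (card F) * k / sqrt k + card F * sqrt k"
    unfolding solution_cost_def by auto
  have "junction_tree E (H e)" for e
    unfolding H_def using finF FE by (simp add: junction_tree_hub_tree)
  moreover have "junction_tree E (L i)" if "i < k" for i
    unfolding L_def using P(1)[OF that] FE finite_subset[OF _ finF]
    by (intro junction_tree_hub_tree) auto
  ultimately have "junction_solution E k s t d Js"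
    unfolding junction_solution_def using Js(1,2) by auto
  moreover have "real (solution_cost Js) \<le> 2 * sqrt k * card F"
    using Js(3) real_div_sqrt[of "real k"] by (simp flip: times_divide_eq_right) (simp add: mult_ac)
  ultimately show ?thesis
    by blast
qed

lemma OPT_attained:
  assumes "finite E" and "spanner_feasible E k s t d E"
  shows "\<exists>F. spanner_feasible E k s t d F \<and> card F = OPT E k s t d"
proof -
  have "{F. spanner_feasible E k s t d F} \<subseteq> Pow E"
    unfolding spanner_feasible_def by auto
  then have "finite {F. spanner_feasible E k s t d F}"
    using assms(1) finite_subset by blast
  then have "OPT E k s t d \<in> card ` {F. spanner_feasible E k s t d F}"
    unfolding OPT_def using assms(2) by (intro Min_in) auto
  then show ?thesis
    by auto
qed

theorem lemma4p2:
  shows "\<exists>C>0. \<forall>(V :: nat set) E k s t d.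
     finite V \<longrightarrow> E \<subseteq> V \<times> V \<longrightarrow>
     (\<forall>i<k. s i \<in> V \<and> t i \<in> V \<and> walk_within E (d i) (s i) (t i)) \<longrightarrow>
     (\<exists>Js. junction_solution E k s t d Js \<and>
        real (solution_cost Js) \<le> C * sqrt (real k) * real (OPT E k s t d))"
proof (intro exI[of _ 2] conjI allI impI)
  fix V :: "nat set" and E :: "(nat \<times> nat) set" and k :: nat and s t d :: "nat \<Rightarrow> nat"
  assume "finite V" and "E \<subseteq> V \<times> V"
    and pairs: "\<forall>i<k. s i \<in> V \<and> t i \<in> V \<and> walk_within E (d i) (s i) (t i)"
  then have finE: "finite E"
    by (meson finite_SigmaI finite_subset)
  moreover have "spanner_feasible E k s t d E"
    using pairs unfolding spanner_feasible_def by simp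
  ultimately obtain F where "spanner_feasible E k s t d F" "card F = OPT E k s t d"
    using OPT_attained by blast
  then show "\<exists>Js. junction_solution E k s t d Js \<and>
      real (solution_cost Js) \<le> 2 * sqrt (real k) * real (OPT E k s t d)"
    using junction_solution_of_spanner[OF finE] by metis
qed simp

end
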